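(* For a topological space $X$ the following are equivalent: (1) $X$ is an Alster space; (2) $X$ satisfies ${\sf S}_1(\mathcal{G}_K,\mathcal{G})$; (3) $X$ satisfies ${\sf S}_1(\mathcal{G}_K,\mathcal{G}_{\Omega})$.
   Context: All spaces are infinite ${\sf T}_1$ topological spaces. For a space $X$: $\mathcal{G}_K$ is the family of all collections $\mathcal{U}$ of ${\sf G}_\delta$ subsets of $X$ such that $X\notin\mathcal{U}$ and for each compact $C\subseteq X$ there is $U\in\mathcal{U}$ with $C\subseteq U$. $\mathcal{G}$ is the family of all covers of $X$ by ${\sf G}_\delta$ sets. $\mathcal{G}_\Omega$ is the family of $\mathcal{U}\in\mathcal{G}$ with $X\notin\mathcal{U}$ such that every finite $F\subseteq X$ is contained in some member of $\mathcal{U}$. $X$ is an Alster space if every member of $\mathcal{G}_K$ has a countable subfamily covering $X$. ${\sf S}_1(\mathcal{A},\mathcal{B})$: for each sequence $(A_n:n\in\mathbb{N})$ of elements of $\mathcal{A}$ there are $B_n\in A_n$ with $\{B_n:n\in\mathbb{N}\}\in\mathcal{B}$. *)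

theory Defs
  imports "HOL-Analysis.Analysis"
begin

definition GK :: "'a topology \<Rightarrow> 'a set set set" where
  "GK X = {\<U>. (\<forall>U\<in>\<U>. gdelta_in X U) \<and> topspace X \<notin> \<U> \<and>
              (\<forall>C. C \<subseteq> topspace X \<and> compactin X C \<longrightarrow> (\<exists>U\<in>\<U>. C \<subseteq> U))}"

definition GCov :: "'a topology \<Rightarrow> 'a set set set" where
  "GCov X = {\<U>. (\<forall>U\<in>\<U>. gdelta_in X U) \<and> \<Union>\<U> = topspace X}"

definition GOmega :: "'a topology \<Rightarrow> 'a set set set" where
  "GOmega X = {\<U>. \<U> \<in> GCov X \<and> topspace X \<notin> \<U> \<and>
              (\<forall>F. finite F \<and> F \<subseteq> topspace X \<longrightarrow> (\<exists>U\<in>\<U>. F \<subseteq> U))}"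

definition alster_space :: "'a topology \<Rightarrow> bool" where
  "alster_space X \<longleftrightarrow> (\<forall>\<U>\<in>GK X. \<exists>\<V>. \<V> \<subseteq> \<U> \<and> countable \<V> \<and> topspace X \<subseteq> \<Union>\<V>)"

definition S1 :: "'b set set \<Rightarrow> 'b set set \<Rightarrow> bool" where
  "S1 \<A> \<B> \<longleftrightarrow> (\<forall>A :: nat \<Rightarrow> 'b set. (\<forall>n. A n \<in> \<A>) \<longrightarrow>
                    (\<exists>B. (\<forall>n. B n \<in> A n) \<and> range B \<in> \<B>))"

end

theory Submission
  imports Defs
begin

text \<open>
  The only nontrivial implication is from the Alster property to \<open>S\<^sub>1(\<G>\<^sub>K, \<G>\<^sub>\<Omega>)\<close>.
  First, every \<open>\<G>\<^sub>K\<close>-family of an Alster space has a countable subfamily covering all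
  finite sets: by induction on \<open>m\<close>, choose for each compact \<open>K\<close> a countable subfamily
  \<open>\<S>\<^sub>K\<close> of the members containing \<open>K\<close> which covers all sets of size at most \<open>m\<close>; the
  intersections \<open>\<Inter>\<S>\<^sub>K\<close> again form a \<open>\<G>\<^sub>K\<close>-family, countably many of them cover \<open>X\<close>,
  and a set \<open>F \<union> {y}\<close> with \<open>y \<in> \<Inter>\<S>\<^sub>K\<close> lies in the member of \<open>\<S>\<^sub>K\<close> containing \<open>F\<close>.
  Given a sequence \<open>\<U>\<^sub>n\<close> in \<open>\<G>\<^sub>K\<close>, apply this to the \<open>\<G>\<^sub>K\<close>-family of all intersections
  \<open>\<Inter>\<^sub>n V\<^sub>n\<close> with \<open>V\<^sub>n \<in> \<U>\<^sub>n\<close>; enumerating the resulting countable family as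
  \<open>\<Inter>\<^sub>n V\<^sub>k\<^sub>,\<^sub>n\<close>, the diagonal \<open>V\<^sub>n\<^sub>,\<^sub>n\<close> is the required selection.
\<close>

lemma GK_memberD:
  assumes "\<U> \<in> GK X" and "U \<in> \<U>"
  shows "gdelta_in X U" "U \<noteq> topspace X" "U \<subseteq> topspace X"
  using assms gdelta_in_subset unfolding GK_def by auto

lemma GK_topspace_nonempty:
  assumes "\<U> \<in> GK X"
  shows "topspace X \<noteq> {}"
proof
  assume "topspace X = {}"
  moreover obtain U where "U \<in> \<U>"
    using assms unfolding GK_def by blast
  ultimately show False
    using GK_memberD[OF assms] by blast
qed

lemma GK_restrict_compact:
  assumes "\<U> \<in> GK X" and "compactin X K"
  shows "{U\<in>\<U>. K \<subseteq> U} \<in> GK X"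
proof -
  have cover: "\<exists>U\<in>\<U>. K \<union> C \<subseteq> U" if "compactin X C" for C
  proof -
    have "compactin X (K \<union> C)"
      using assms(2) that by (rule compactin_Un)
    then show ?thesis
      using assms(1) compactin_subset_topspace unfolding GK_def by blast
  qed
  show ?thesis
    unfolding GK_def
  proof (intro CollectI conjI allI impI)
    show "\<forall>U\<in>{U\<in>\<U>. K \<subseteq> U}. gdelta_in X U"
      using GK_memberD(1)[OF assms(1)] by blast
    show "topspace X \<notin> {U\<in>\<U>. K \<subseteq> U}"
      using assms(1) by (simp add: GK_def)
    fix C assume "C \<subseteq> topspace X \<and> compactin X C"
    then obtain U where "U \<in> \<U>" "K \<union> C \<subseteq> U"
      using cover by blast
    then show "\<exists>U\<in>{U\<in>\<U>. K \<subseteq> U}. C \<subseteq> U"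
      by auto
  qed
qed

lemma gdelta_in_Inter_proper:
  assumes "countable \<S>" and "\<S> \<noteq> {}"
    and "\<And>S. S \<in> \<S> \<Longrightarrow> gdelta_in X S \<and> S \<noteq> topspace X"
  shows "gdelta_in X (\<Inter>\<S>)" "\<Inter>\<S> \<noteq> topspace X"
proof -
  show "gdelta_in X (\<Inter>\<S>)"
    using assms by (intro gdelta_in_Inter) auto
  obtain S where "S \<in> \<S>" using assms(2) by blast
  then show "\<Inter>\<S> \<noteq> topspace X"
    using assms(3)[of S] gdelta_in_subset by blast
qed

definition covers_card_le :: "'a topology \<Rightarrow> nat \<Rightarrow> 'a set set \<Rightarrow> bool" where
  "covers_card_le X m \<S> \<longleftrightarrow>
     (\<forall>F. finite F \<and> F \<subseteq> topspace X \<and> card F \<le> m \<longrightarrow> (\<exists>U\<in>\<S>. F \<subseteq> U))"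

lemma covers_card_leD:
  "covers_card_le X m \<S> \<Longrightarrow> finite F \<Longrightarrow> F \<subseteq> topspace X \<Longrightarrow> card F \<le> m \<Longrightarrow> \<exists>U\<in>\<S>. F \<subseteq> U"
  unfolding covers_card_le_def by blast

lemma covers_card_le_nonempty: "covers_card_le X m \<S> \<Longrightarrow> \<S> \<noteq> {}"
  unfolding covers_card_le_def by fastforce

lemma GK_Inters_of_subfamilies:
  assumes \<U>: "\<U> \<in> GK X"
    and S: "\<And>K. compactin X K \<Longrightarrow> S K \<subseteq> {U\<in>\<U>. K \<subseteq> U} \<and> countable (S K) \<and> S K \<noteq> {}"
  shows "(\<lambda>K. \<Inter>(S K)) ` {K. compactin X K} \<in> GK X"
proof -
  have gdelta: "gdelta_in X (\<Inter>(S K))" and proper: "\<Inter>(S K) \<noteq> topspace X"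
    if "compactin X K" for K
  proof -
    have "countable (S K)" "S K \<noteq> {}" "S K \<subseteq> \<U>"
      using S[OF that] by auto
    then show "gdelta_in X (\<Inter>(S K))" "\<Inter>(S K) \<noteq> topspace X"
      using gdelta_in_Inter_proper[of "S K" X] GK_memberD[OF \<U>] by blast+
  qed
  show ?thesis
    unfolding GK_def
  proof (intro CollectI conjI)
    show "\<forall>W\<in>(\<lambda>K. \<Inter>(S K)) ` {K. compactin X K}. gdelta_in X W"
      using gdelta by blast
    show "topspace X \<notin> (\<lambda>K. \<Inter>(S K)) ` {K. compactin X K}"
      using proper by blast
    show "\<forall>C. C \<subseteq> topspace X \<and> compactin X C \<longrightarrow> (\<exists>W\<in>(\<lambda>K. \<Inter>(S K)) ` {K. compactin X K}. C \<subseteq> W)"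
      using S by blast
  qed
qed

lemma covers_card_le_Suc_UN:
  assumes cover: "topspace X \<subseteq> (\<Union>K\<in>\<K>. \<Inter>(S K))" and "topspace X \<noteq> {}"
    and S: "\<And>K. K \<in> \<K> \<Longrightarrow> covers_card_le X m (S K)"
  shows "covers_card_le X (Suc m) (\<Union>K\<in>\<K>. S K)"
  unfolding covers_card_le_def
proof (intro allI impI)
  fix F assume F: "finite F \<and> F \<subseteq> topspace X \<and> card F \<le> Suc m"
  have "\<exists>y\<in>topspace X. card (F - {y}) \<le> m"
  proof (cases "F = {}")
    case True
    then show ?thesis using \<open>topspace X \<noteq> {}\<close> by fastforce
  next
    case False
    then obtain y where "y \<in> F" by blast
    then show ?thesis using F by (intro bexI[of _ y]) auto
  qed
  then obtain y K where y: "card (F - {y}) \<le> m" and K: "K \<in> \<K>" "y \<in> \<Inter>(S K)"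
    using cover by blast
  obtain U where "U \<in> S K" "F - {y} \<subseteq> U"
    using covers_card_leD[OF S[OF K(1)], of "F - {y}"] F y by blast
  with K show "\<exists>U\<in>\<Union>K\<in>\<K>. S K. F \<subseteq> U" by blast
qed

lemma alster_covers_card_le_Suc:
  assumes alster: "alster_space X" and \<U>: "\<U> \<in> GK X"
    and IH: "\<And>\<U>. \<U> \<in> GK X \<Longrightarrow> \<exists>\<S>\<subseteq>\<U>. countable \<S> \<and> covers_card_le X m \<S>"
  shows "\<exists>\<S>\<subseteq>\<U>. countable \<S> \<and> covers_card_le X (Suc m) \<S>"
proof -
  have "\<exists>\<S>\<subseteq>{U\<in>\<U>. K \<subseteq> U}. countable \<S> \<and> covers_card_le X m \<S>" if "compactin X K" for K
    using IH GK_restrict_compact[OF \<U> that] by blast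
  then obtain S where S: "\<And>K. compactin X K \<Longrightarrow>
      S K \<subseteq> {U\<in>\<U>. K \<subseteq> U} \<and> countable (S K) \<and> covers_card_le X m (S K)"
    by metis
  then have "(\<lambda>K. \<Inter>(S K)) ` {K. compactin X K} \<in> GK X"
    using covers_card_le_nonempty by (intro GK_Inters_of_subfamilies[OF \<U>]) blast
  then obtain \<V> where \<V>: "\<V> \<subseteq> (\<lambda>K. \<Inter>(S K)) ` {K. compactin X K}" "countable \<V>"
      "topspace X \<subseteq> \<Union>\<V>"
    using alster unfolding alster_space_def by meson
  obtain \<K> where \<K>: "countable \<K>" "\<K> \<subseteq> {K. compactin X K}"
    and "\<V> = (\<lambda>K. \<Inter>(S K)) ` \<K>"
    using countable_subset_image[THEN iffD1, OF conjI[OF \<V>(2,1)]] by blast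
  with \<V>(3) have "topspace X \<subseteq> (\<Union>K\<in>\<K>. \<Inter>(S K))" by simp
  then have "covers_card_le X (Suc m) (\<Union>K\<in>\<K>. S K)"
    using GK_topspace_nonempty[OF \<U>] S \<K>(2) by (intro covers_card_le_Suc_UN) blast+
  moreover have "(\<Union>K\<in>\<K>. S K) \<subseteq> \<U>" "countable (\<Union>K\<in>\<K>. S K)"
    using S \<K> by auto
  ultimately show ?thesis by blast
qed

lemma alster_covers_card_le:
  assumes alster: "alster_space X" and "\<U> \<in> GK X"
  shows "\<exists>\<S>\<subseteq>\<U>. countable \<S> \<and> covers_card_le X m \<S>"
  using assms(2)
proof (induction m arbitrary: \<U>)
  case 0
  then obtain U where "U \<in> \<U>"
    unfolding GK_def by blast
  moreover have "covers_card_le X 0 {U}"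
    unfolding covers_card_le_def by auto
  ultimately show ?case by blast
next
  case (Suc m)
  then show ?case
    using alster_covers_card_le_Suc[OF alster] by blast
qed

lemma alster_countable_omega_subfamily:
  assumes "alster_space X" and "\<U> \<in> GK X"
  shows "\<exists>\<S>\<subseteq>\<U>. countable \<S> \<and> (\<forall>F. finite F \<and> F \<subseteq> topspace X \<longrightarrow> (\<exists>U\<in>\<S>. F \<subseteq> U))"
proof -
  have "\<forall>m. \<exists>\<S>. \<S> \<subseteq> \<U> \<and> countable \<S> \<and> covers_card_le X m \<S>"
    using alster_covers_card_le[OF assms] by blast
  from choice[OF this] obtain S
    where "\<forall>m. S m \<subseteq> \<U> \<and> countable (S m) \<and> covers_card_le X m (S m)"
    by blast
  then have S: "S m \<subseteq> \<U>" "countable (S m)" and covers: "covers_card_le X m (S m)" for m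
    by simp_all
  have "\<exists>U\<in>(\<Union>m. S m). F \<subseteq> U" if F: "finite F" "F \<subseteq> topspace X" for F
  proof -
    obtain U where "U \<in> S (card F)" "F \<subseteq> U"
      using covers_card_leD[OF covers F order.refl] by blast
    then show ?thesis by blast
  qed
  moreover have "(\<Union>m. S m) \<subseteq> \<U>" "countable (\<Union>m. S m)"
    using S by auto
  ultimately show ?thesis by blast
qed

lemma GK_Inters_of_selections:
  fixes \<U> :: "nat \<Rightarrow> 'a set set"
  assumes "\<And>n. \<U> n \<in> GK X"
  shows "(\<lambda>V. \<Inter>(range V)) ` {V. \<forall>n. V n \<in> \<U> n} \<in> GK X"
  unfolding GK_def
proof (intro CollectI conjI ballI allI impI)
  fix W assume "W \<in> (\<lambda>V. \<Inter>(range V)) ` {V. \<forall>n. V n \<in> \<U> n}"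
  then obtain V where V: "\<And>n. V n \<in> \<U> n" and W: "W = \<Inter>(range V)" by blast
  have "\<And>S. S \<in> range V \<Longrightarrow> gdelta_in X S \<and> S \<noteq> topspace X"
    using GK_memberD[OF assms V] by blast
  then show "gdelta_in X W"
    unfolding W by (intro gdelta_in_Inter_proper) auto
next
  show "topspace X \<notin> (\<lambda>V. \<Inter>(range V)) ` {V. \<forall>n. V n \<in> \<U> n}"
  proof
    assume "topspace X \<in> (\<lambda>V. \<Inter>(range V)) ` {V. \<forall>n. V n \<in> \<U> n}"
    then obtain V where V: "\<And>n. V n \<in> \<U> n" and "topspace X = \<Inter>(range V)" by blast
    then have "topspace X \<subseteq> V 0" by blast
    then show False
      using GK_memberD[OF assms V[of 0]] by blast
  qed
next
  fix C assume C: "C \<subseteq> topspace X \<and> compactin X C"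
  have "\<forall>n. \<exists>U. U \<in> \<U> n \<and> C \<subseteq> U"
    using assms C unfolding GK_def by blast
  then obtain V where "\<And>n. V n \<in> \<U> n \<and> C \<subseteq> V n"
    by metis
  then show "\<exists>W\<in>(\<lambda>V. \<Inter>(range V)) ` {V. \<forall>n. V n \<in> \<U> n}. C \<subseteq> W" by blast
qed

lemma GOmegaI:
  assumes "\<And>V. V \<in> \<V> \<Longrightarrow> gdelta_in X V" and "topspace X \<notin> \<V>"
    and "\<And>F. finite F \<Longrightarrow> F \<subseteq> topspace X \<Longrightarrow> \<exists>V\<in>\<V>. F \<subseteq> V"
  shows "\<V> \<in> GOmega X"
proof -
  have "topspace X \<subseteq> \<Union>\<V>"
  proof
    fix x assume "x \<in> topspace X"
    then obtain V where "V \<in> \<V>" "{x} \<subseteq> V"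
      using assms(3)[of "{x}"] by auto
    then show "x \<in> \<Union>\<V>" by blast
  qed
  moreover have "\<Union>\<V> \<subseteq> topspace X"
    using assms(1) gdelta_in_subset by blast
  ultimately have "\<V> \<in> GCov X"
    using assms(1) unfolding GCov_def by blast
  then show ?thesis
    using assms(2,3) unfolding GOmega_def by blast
qed

lemma diagonal_selection:
  fixes \<U> :: "nat \<Rightarrow> 'a set set"
  assumes "countable \<S>" and "\<S> \<noteq> {}"
    and \<S>: "\<S> \<subseteq> (\<lambda>V. \<Inter>(range V)) ` {V. \<forall>n. V n \<in> \<U> n}"
  obtains B where "\<And>n. B n \<in> \<U> n" and "\<And>W. W \<in> \<S> \<Longrightarrow> \<exists>n. W \<subseteq> B n"
proof -
  define V where "V k = inv_into {V. \<forall>n. V n \<in> \<U> n} (\<lambda>V. \<Inter>(range V)) (from_nat_into \<S> k)"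
    for k
  have enum_in: "from_nat_into \<S> k \<in> (\<lambda>V. \<Inter>(range V)) ` {V. \<forall>n. V n \<in> \<U> n}" for k
    using subsetD[OF \<S> from_nat_into[OF \<open>\<S> \<noteq> {}\<close>]] .
  have "V k \<in> {V. \<forall>n. V n \<in> \<U> n}" for k
    unfolding V_def by (rule inv_into_into[OF enum_in])
  then have V: "V k n \<in> \<U> n" for k n
    by blast
  have enum: "\<Inter>(range (V k)) = from_nat_into \<S> k" for k
    unfolding V_def by (rule f_inv_into_f[OF enum_in])
  have "\<exists>n. W \<subseteq> V n n" if W: "W \<in> \<S>" for W
  proof -
    obtain k where "from_nat_into \<S> k = W"
      using from_nat_into_surj[OF \<open>countable \<S>\<close> W] by blast
    then have "W \<subseteq> V k k"
      using enum[of k] by blast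
    then show ?thesis by blast
  qed
  with V show ?thesis
    using that[of "\<lambda>n. V n n"] by blast
qed

lemma alster_imp_S1_GK_GOmega:
  assumes "alster_space X"
  shows "S1 (GK X) (GOmega X)"
  unfolding S1_def
proof (intro allI impI)
  fix \<U> :: "nat \<Rightarrow> 'a set set" assume "\<forall>n. \<U> n \<in> GK X"
  then have \<U>: "\<And>n. \<U> n \<in> GK X" by blast
  from alster_countable_omega_subfamily[OF assms GK_Inters_of_selections[of \<U>, OF \<U>]]
  obtain \<S> where \<S>: "\<S> \<subseteq> (\<lambda>V. \<Inter>(range V)) ` {V. \<forall>n. V n \<in> \<U> n}" "countable \<S>"
    and omega: "\<forall>F. finite F \<and> F \<subseteq> topspace X \<longrightarrow> (\<exists>W\<in>\<S>. F \<subseteq> W)"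
    by (elim exE conjE)
  have "\<S> \<noteq> {}"
    using omega[rule_format, of "{}"] by blast
  then obtain B where B: "\<And>n. B n \<in> \<U> n" and diagonal: "\<And>W. W \<in> \<S> \<Longrightarrow> \<exists>n. W \<subseteq> B n"
    using diagonal_selection[OF \<S>(2) _ \<S>(1)] by blast
  have "range B \<in> GOmega X"
  proof (rule GOmegaI)
    show "gdelta_in X V" if "V \<in> range B" for V
      using that GK_memberD(1)[OF \<U> B] by blast
    show "topspace X \<notin> range B"
      using GK_memberD(2)[OF \<U> B] by auto
    show "\<exists>V\<in>range B. F \<subseteq> V" if "finite F" "F \<subseteq> topspace X" for F
    proof -
      obtain W where "W \<in> \<S>" "F \<subseteq> W"
        using omega \<open>finite F\<close> \<open>F \<subseteq> topspace X\<close> by blast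
      then obtain n where "F \<subseteq> B n"
        using diagonal by blast
      then show ?thesis by blast
    qed
  qed
  with B show "\<exists>B. (\<forall>n. B n \<in> \<U> n) \<and> range B \<in> GOmega X"
    by blast
qed

lemma S1_mono: "\<B> \<subseteq> \<B>' \<Longrightarrow> S1 \<A> \<B> \<Longrightarrow> S1 \<A> \<B>'"
  unfolding S1_def by blast

lemma GOmega_subset_GCov: "GOmega X \<subseteq> GCov X"
  unfolding GOmega_def by blast

lemma S1_GK_GCov_imp_alster:
  assumes "S1 (GK X) (GCov X)"
  shows "alster_space X"
  unfolding alster_space_def
proof
  fix \<U> assume "\<U> \<in> GK X"
  then obtain B :: "nat \<Rightarrow> 'a set" where "\<forall>n. B n \<in> \<U>" "range B \<in> GCov X"
    using assms[unfolded S1_def, rule_format, of "\<lambda>_. \<U>"] by blast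
  then show "\<exists>\<V>\<subseteq>\<U>. countable \<V> \<and> topspace X \<subseteq> \<Union>\<V>"
    unfolding GCov_def by (intro exI[of _ "range B"]) auto
qed

theorem lemma4p3:
  fixes X :: "'a topology"
  assumes "t1_space X" and "infinite (topspace X)"
  shows "(alster_space X \<longleftrightarrow> S1 (GK X) (GCov X))
       \<and> (S1 (GK X) (GCov X) \<longleftrightarrow> S1 (GK X) (GOmega X))"
proof -
  have "S1 (GK X) (GOmega X) \<Longrightarrow> S1 (GK X) (GCov X)"
    by (rule S1_mono[OF GOmega_subset_GCov])
  then show ?thesis
    using alster_imp_S1_GK_GOmega[of X] S1_GK_GCov_imp_alster[of X] by blast
qed

end
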